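(* There is no function $V(t,x,m,P)$ which, for each $(t,P)$, is a polynomial of finite degree in $(x,m)$ (with coefficients depending smoothly on $(t,P)$) and satisfies $V_{xx}>0$, such that $V$ solves the reduced HJB equation $$0=V_t+\frac{P^2}{2}V_{mm}-P^2V_P-\frac{(mV_x+PV_{xm})^2}{2V_{xx}}-\frac{\tau}{2}\log\!\Big(\frac{2\pi\tau}{\sigma^2V_{xx}}\Big),$$ where $\pi=3.14159\ldots$.
   Context: Constants $\sigma>0$, $\tau>0$; $P\ge 0$ is the posterior variance variable and $m$ the posterior mean variable of an unknown Sharpe ratio, $x$ is discounted wealth. *)

theory Defs
  imports "HOL-Analysis.Analysis"
begin

text \<open>Infinitely (Frechet-)differentiable real functions of two real variables on a set S
  (meant for open S): f is differentiable at every point of S with partial derivatives g, h,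
  and g, h are again smooth on S (coinductively, i.e. derivatives of all orders exist).\<close>
coinductive smooth2_on :: "(real \<times> real) set \<Rightarrow> (real \<times> real \<Rightarrow> real) \<Rightarrow> bool" where
  "(\<And>p. p \<in> S \<Longrightarrow> (f has_derivative (\<lambda>(u, v). g p * u + h p * v)) (at p))
   \<Longrightarrow> smooth2_on S g \<Longrightarrow> smooth2_on S h \<Longrightarrow> smooth2_on S f"

end

theory Submission
  imports Defs "HOL-Computational_Algebra.Polynomial"
begin

(* For fixed t, P and m, multiplying the equation by V_xx shows that V_xx ln V_xx is a polynomial
   in x. The logarithm of a nonconstant positive polynomial is unbounded but sublinear, so it is not
   a rational function; hence V_xx is constant in x and, likewise, in m: V_xx = a(t,P) > 0.
   Then V is quadratic in x, and the second difference f(1) + f(-1) - 2 f(0) in x of the equation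
   removes the logarithm and V_mm, turns the square term into m^2 a, and leaves the second differences
   of V_t and V_P, which are the t- and P-derivatives of a and do not depend on m.
   Comparing m = 0 with m = 1 gives a = 0. *)

lemma poly_quotient_tendsto_at_infinity:
  fixes a b :: "'a::real_normed_field poly"
  assumes "degree b \<le> degree a" and "a \<noteq> 0"
  shows "((\<lambda>x. poly b x / poly a x) \<longlongrightarrow> coeff b (degree a) / lead_coeff a) at_infinity"
proof (cases "degree b = degree a")
  case True
  have "((\<lambda>x. (poly b x / x ^ degree b) / (poly a x / x ^ degree a))
          \<longlongrightarrow> lead_coeff b / lead_coeff a) at_infinity"
    using assms(2) by (intro tendsto_divide poly_divide_tendsto_aux) auto
  moreover have "eventually (\<lambda>x. (poly b x / x ^ degree b) / (poly a x / x ^ degree a)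
                               = poly b x / poly a x) at_infinity"
    by (rule eventually_at_infinityI[of 1]) (use True in auto)
  ultimately show ?thesis
    using True by (auto intro: Lim_transform_eventually)
next
  case False
  then show ?thesis
    using assms poly_divide_tendsto_0_at_infinity[of b a] by (simp add: coeff_eq_0)
qed

lemma degree_eq_0_if_poly_times_ln_poly:
  fixes p q :: "real poly"
  assumes pos: "\<And>x. poly p x > 0" and eq: "\<And>x. poly p x * ln (poly p x) = poly q x"
  shows "degree p = 0"
proof (rule ccontr)
  assume deg: "degree p \<noteq> 0"
  then have "p \<noteq> 0" by auto
  have quotient: "poly q x / poly p x = ln (poly p x)" for x
    using eq[of x] pos[of x] by (auto simp: field_simps)
  have "filterlim (poly p) at_infinity at_top"
    using filterlim_poly_at_infinity[of p] deg filterlim_mono at_top_le_at_infinity by blast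
  from filterlim_at_infinity_imp_norm_at_top[OF this] have "filterlim (poly p) at_top at_top"
    using pos by (simp add: abs_of_pos)
  with ln_at_top have ln_at_top: "filterlim (\<lambda>x. ln (poly p x)) at_top at_top"
    by (rule filterlim_compose)
  have ln_sublinear: "((\<lambda>x. ln (poly p x) / x) \<longlongrightarrow> 0) at_top"
  proof -
    have lim: "((\<lambda>x. poly p x / x ^ degree p) \<longlongrightarrow> lead_coeff p) at_top"
      using poly_divide_tendsto_aux[of p] tendsto_mono at_top_le_at_infinity by blast
    have "lead_coeff p \<ge> 0"
      by (rule tendsto_lowerbound[OF lim])
        (use pos in \<open>auto intro!: eventually_at_top_linorderI[of 1] less_imp_le divide_pos_pos\<close>)
    with \<open>p \<noteq> 0\<close> have "lead_coeff p > 0" by (simp add: order_less_le)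
    with lim have "((\<lambda>x. ln (poly p x / x ^ degree p) / x + real (degree p) * (ln x / x))
                     \<longlongrightarrow> 0 + real (degree p) * 0) at_top"
      by (intro tendsto_intros tendsto_divide_0[of _ "ln (lead_coeff p)"] ln_x_over_x_tendsto_0
          filterlim_at_top_imp_at_infinity filterlim_ident) auto
    moreover have "eventually (\<lambda>x. ln (poly p x / x ^ degree p) / x + real (degree p) * (ln x / x)
                                 = ln (poly p x) / x) at_top"
      using eventually_gt_at_top[of 0]
    proof eventually_elim
      case (elim x)
      with pos[of x] show ?case by (simp add: ln_div ln_realpow diff_divide_distrib)
    qed
    ultimately show ?thesis by (simp add: tendsto_cong)
  qed
  show False
  proof (cases "degree q \<le> degree p")
    case True
    then have "((\<lambda>x. ln (poly p x)) \<longlongrightarrow> coeff q (degree p) / lead_coeff p) at_top"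
      using poly_quotient_tendsto_at_infinity[of q p] \<open>p \<noteq> 0\<close> tendsto_mono at_top_le_at_infinity
      by (simp add: quotient)
    then show False
      using ln_at_top not_tendsto_and_filterlim_at_infinity filterlim_at_top_imp_at_infinity
      by (metis trivial_limit_at_top_linorder)
  next
    case False
    define b where "b = p * [:0, 1:]"
    have "degree b \<le> degree q" and "q \<noteq> 0"
      using False \<open>p \<noteq> 0\<close> by (auto simp: b_def degree_mult_eq)
    then have "((\<lambda>x. x / ln (poly p x)) \<longlongrightarrow> coeff b (degree q) / lead_coeff q) at_top"
      using poly_quotient_tendsto_at_infinity[of b q] tendsto_mono at_top_le_at_infinity
      by (simp add: b_def flip: quotient)
    moreover have "filterlim (\<lambda>x. x / ln (poly p x)) at_top at_top"
    proof -
      have "eventually (\<lambda>x. 0 < ln (poly p x) / x) at_top"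
        using eventually_gt_at_top[of 0] ln_at_top[unfolded filterlim_at_top_dense, rule_format, of 0]
        by eventually_elim simp
      from filterlim_inverse_at_top[OF ln_sublinear this] show ?thesis by simp
    qed
    ultimately show False
      using not_tendsto_and_filterlim_at_infinity filterlim_at_top_imp_at_infinity
      by (metis trivial_limit_at_top_linorder)
  qed
qed

lemma real_polynomial_function_imp_poly:
  fixes f :: "real \<Rightarrow> real"
  assumes "real_polynomial_function f"
  shows "\<exists>p. f = poly p"
  using assms
proof (induction rule: real_polynomial_function.induct)
  case (linear f)
  then obtain c where "f = (\<lambda>x. x * c)"
    by (auto simp: real_bounded_linear)
  then have "f = poly [:0, c:]" by auto
  then show ?case ..
next
  case (const c)
  have "(\<lambda>x. c) = poly [:c:]" by auto
  then show ?case ..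
next
  case (add f g)
  then show ?case by (metis poly_add)
next
  case (mult f g)
  then show ?case by (metis poly_mult)
qed

lemma real_polynomial_function_const_if_times_ln:
  fixes f g :: "real \<Rightarrow> real"
  assumes "real_polynomial_function f" "real_polynomial_function g"
    and "\<And>x. f x > 0" "\<And>x. f x * ln (f x) = g x"
  shows "f x = f y"
proof -
  obtain p q where p: "f = poly p" and q: "g = poly q"
    using assms(1,2) real_polynomial_function_imp_poly by metis
  have "degree p = 0"
    by (rule degree_eq_0_if_poly_times_ln_poly[of p q]) (use assms p q in auto)
  then obtain c where "p = [:c:]"
    by (rule degree_eq_zeroE)
  then show ?thesis
    using p by simp
qed

lemma real_polynomial_function_const_if_log_balance:
  fixes A R B :: "real \<Rightarrow> real" and \<tau> K :: real
  assumes "real_polynomial_function A" "real_polynomial_function R" "real_polynomial_function B"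
    and pos: "\<And>x. A x > 0" and "\<tau> > 0" "K > 0"
    and eq: "\<And>x. 0 = R x - (B x)\<^sup>2 / (2 * A x) - \<tau> / 2 * ln (K / A x)"
  shows "A x = A y"
proof (rule real_polynomial_function_const_if_times_ln[of A])
  show "real_polynomial_function (\<lambda>x. A x * ln K - 2 / \<tau> * (A x * R x - (B x)\<^sup>2 / 2))"
    using assms(1-3)
    by (intro real_polynomial_function_diff real_polynomial_function.intros(2,4)
        real_polynomial_function_divide real_polynomial_function_power)
  show "A x * ln (A x) = A x * ln K - 2 / \<tau> * (A x * R x - (B x)\<^sup>2 / 2)" for x
  proof -
    have "\<tau> / 2 * (ln K - ln (A x)) = R x - (B x)\<^sup>2 / (2 * A x)"
      using eq[of x] pos[of x] \<open>K > 0\<close> by (simp add: ln_div)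
    then show ?thesis
      using pos[of x] \<open>\<tau> > 0\<close> by (simp add: field_simps)
  qed
qed (use assms in auto)

definition second_difference :: "(real \<Rightarrow> real) \<Rightarrow> real" where
  "second_difference f = f 1 + f (-1) - 2 * f 0"

lemma second_difference_const [simp]: "second_difference (\<lambda>x. c) = 0"
  by (simp add: second_difference_def)

lemma second_difference_add [simp]:
  "second_difference (\<lambda>x. f x + g x) = second_difference f + second_difference g"
  by (simp add: second_difference_def)

lemma second_difference_diff [simp]:
  "second_difference (\<lambda>x. f x - g x) = second_difference f - second_difference g"
  by (simp add: second_difference_def)

lemma second_difference_cmult [simp]:
  "second_difference (\<lambda>x. c * f x) = c * second_difference f"
  by (simp add: second_difference_def algebra_simps)

lemma second_difference_square_affine:
  assumes "\<And>x. u x = u 0 + a * x" and "\<And>x. w x = w 0"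
  shows "second_difference (\<lambda>x. (m * u x + w x)\<^sup>2 / (2 * a)) = m\<^sup>2 * a"
proof (cases "a = 0")
  case False
  then show ?thesis
    using assms(1)[of 1] assms(1)[of "-1"] assms(2)[of 1] assms(2)[of "-1"]
    by (simp add: second_difference_def power2_eq_square divide_simps) (simp add: algebra_simps)
qed (simp add: second_difference_def)

lemma has_real_derivative_second_difference:
  assumes "\<And>x. ((\<lambda>s. F s x) has_real_derivative F' x) (at t)"
  shows "((\<lambda>s. second_difference (F s)) has_real_derivative second_difference F') (at t)"
  unfolding second_difference_def by (intro DERIV_diff DERIV_add DERIV_cmult assms)

lemma affine_if_const_derivative:
  assumes "\<And>x. (f has_real_derivative c) (at x)"
  shows "f x = f 0 + c * x"
proof -
  have "((\<lambda>x. f x - c * x) has_real_derivative 0) (at x)" for x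
    using DERIV_diff[OF assms DERIV_cmult[OF DERIV_ident, of c]] by simp
  from DERIV_isconst_all[OF allI[OF this], of x 0] show ?thesis
    by simp
qed

lemma second_difference_eq_if_const_second_derivative:
  assumes f': "\<And>x. (f has_real_derivative f' x) (at x)"
    and f'': "\<And>x. (f' has_real_derivative c) (at x)"
  shows "second_difference f = c"
proof -
  have g': "((\<lambda>x. f x - c / 2 * x\<^sup>2) has_real_derivative f' 0) (at x)" for x
  proof -
    have "((\<lambda>x. f x - c / 2 * x\<^sup>2) has_real_derivative f' x - c / 2 * (2 * x)) (at x)"
      by (intro DERIV_diff f' DERIV_cmult) (use DERIV_pow[of 2 x] in simp)
    then show ?thesis
      using affine_if_const_derivative[OF f'', of x] by simp
  qed
  have "f x = f 0 + f' 0 * x + c / 2 * x\<^sup>2" for x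
    using affine_if_const_derivative[OF g', of x] by (simp add: algebra_simps)
  from this[of 1] this[of "-1"] show ?thesis
    by (simp add: second_difference_def)
qed

lemma has_real_derivative_unique_on_open:
  assumes "(f has_real_derivative f') (at x)" "(g has_real_derivative g') (at x)"
    and "open S" "x \<in> S" "\<And>y. y \<in> S \<Longrightarrow> f y = g y"
  shows "f' = g'"
  using DERIV_unique has_field_derivative_transform_within_open assms by metis

definition power_deriv :: "nat \<Rightarrow> nat \<Rightarrow> real \<Rightarrow> real" where
  "power_deriv k i x = (\<Prod>j<k. real i - real j) * x ^ (i - k)"

lemma power_deriv_0 [simp]: "power_deriv 0 i x = x ^ i"
  by (simp add: power_deriv_def)

lemma has_real_derivative_power_deriv:
  "(power_deriv k i has_real_derivative power_deriv (Suc k) i x) (at x)"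
proof (cases "k < i")
  case True
  have "(power_deriv k i has_real_derivative
          (\<Prod>j<k. real i - real j) * (real (i - k) * x ^ (i - k - Suc 0))) (at x)"
    unfolding power_deriv_def by (intro DERIV_cmult DERIV_pow)
  with True show ?thesis
    by (simp add: power_deriv_def of_nat_diff mult_ac)
next
  case False
  have vanishing: "(\<Prod>j<Suc k. real i - real j) = 0"
    by (rule prod_zero) (use False in \<open>auto intro!: bexI[of _ i]\<close>)
  have "i - k = 0"
    using False by simp
  then show ?thesis
    unfolding power_deriv_def vanishing by simp
qed

lemma real_polynomial_function_power_deriv: "real_polynomial_function (power_deriv k i)"
  unfolding power_deriv_def
  by (intro real_polynomial_function.intros(2,4) real_polynomial_function_power)
    (simp add: real_polynomial_function_eq)

definition bipoly_deriv :: "nat \<Rightarrow> (nat \<Rightarrow> nat \<Rightarrow> real) \<Rightarrow> nat \<Rightarrow> nat \<Rightarrow> real \<Rightarrow> real \<Rightarrow> real" where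
  "bipoly_deriv N a k l x y = (\<Sum>i\<le>N. \<Sum>j\<le>N. a i j * power_deriv k i x * power_deriv l j y)"

lemma bipoly_deriv_0_0: "bipoly_deriv N a 0 0 x y = (\<Sum>i\<le>N. \<Sum>j\<le>N. a i j * x ^ i * y ^ j)"
  by (simp add: bipoly_deriv_def)

lemma has_real_derivative_bipoly_deriv_fst:
  "((\<lambda>x. bipoly_deriv N a k l x y) has_real_derivative bipoly_deriv N a (Suc k) l x y) (at x)"
  unfolding bipoly_deriv_def
  by (intro DERIV_sum DERIV_cmult DERIV_cmult_right has_real_derivative_power_deriv)

lemma has_real_derivative_bipoly_deriv_snd:
  "((\<lambda>y. bipoly_deriv N a k l x y) has_real_derivative bipoly_deriv N a k (Suc l) x y) (at y)"
  unfolding bipoly_deriv_def by (intro DERIV_sum DERIV_cmult has_real_derivative_power_deriv)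

lemma has_real_derivative_bipoly_deriv_coeffs:
  assumes "\<And>i j. ((\<lambda>s. a i j s) has_real_derivative a' i j) (at t)"
  shows "((\<lambda>s. bipoly_deriv N (\<lambda>i j. a i j s) k l x y) has_real_derivative bipoly_deriv N a' k l x y)
    (at t)"
  unfolding bipoly_deriv_def by (intro DERIV_sum DERIV_cmult_right assms)

lemma deriv_bipoly_deriv_fst [simp]:
  "deriv (\<lambda>x. bipoly_deriv N a k l x y) = (\<lambda>x. bipoly_deriv N a (Suc k) l x y)"
  by (rule ext DERIV_imp_deriv has_real_derivative_bipoly_deriv_fst)+

lemma deriv_bipoly_deriv_snd [simp]:
  "deriv (\<lambda>y. bipoly_deriv N a k l x y) = (\<lambda>y. bipoly_deriv N a k (Suc l) x y)"
  by (rule ext DERIV_imp_deriv has_real_derivative_bipoly_deriv_snd)+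

lemma real_polynomial_function_bipoly_deriv_fst:
  "real_polynomial_function (\<lambda>x. bipoly_deriv N a k l x y)"
  unfolding bipoly_deriv_def
  by (intro real_polynomial_function_sum real_polynomial_function.intros(2,4)
      real_polynomial_function_power_deriv) auto

lemma real_polynomial_function_bipoly_deriv_snd:
  "real_polynomial_function (\<lambda>y. bipoly_deriv N a k l x y)"
  unfolding bipoly_deriv_def
  by (intro real_polynomial_function_sum real_polynomial_function.intros(2,4)
      real_polynomial_function_power_deriv) auto

(* Right-hand side of the reduced HJB equation at fixed (t, P) for V = (SUM i j. C i j * x^i * m^j),
   where Ct and CP are the coefficients of V_t and V_P and K = 2 pi tau / sigma^2. *)
definition hjb_residual ::
    "real \<Rightarrow> real \<Rightarrow> nat \<Rightarrow> (nat \<Rightarrow> nat \<Rightarrow> real) \<Rightarrow> (nat \<Rightarrow> nat \<Rightarrow> real) \<Rightarrow> (nat \<Rightarrow> nat \<Rightarrow> real)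
      \<Rightarrow> real \<Rightarrow> real \<Rightarrow> real \<Rightarrow> real" where
  "hjb_residual \<tau> K N C Ct CP P x m =
     bipoly_deriv N Ct 0 0 x m + P\<^sup>2 / 2 * bipoly_deriv N C 0 2 x m - P\<^sup>2 * bipoly_deriv N CP 0 0 x m
     - (m * bipoly_deriv N C 1 0 x m + P * bipoly_deriv N C 1 1 x m)\<^sup>2 / (2 * bipoly_deriv N C 2 0 x m)
     - \<tau> / 2 * ln (K / bipoly_deriv N C 2 0 x m)"

lemma bipoly_deriv_quadratic_fst:
  assumes Vxx: "\<And>x y. bipoly_deriv N a 2 0 x y = \<alpha>"
  shows "bipoly_deriv N a 1 0 x y = bipoly_deriv N a 1 0 0 y + \<alpha> * x"
    and "bipoly_deriv N a 1 1 x y = bipoly_deriv N a 1 1 0 y"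
    and "second_difference (\<lambda>x. bipoly_deriv N a 0 0 x y) = \<alpha>"
    and "second_difference (\<lambda>x. bipoly_deriv N a 0 2 x y) = 0"
proof -
  have Vx_x: "((\<lambda>x. bipoly_deriv N a 1 0 x y) has_real_derivative \<alpha>) (at x)" for x y
    using has_real_derivative_bipoly_deriv_fst[of N a 1 0 y x] by (simp add: Vxx[unfolded numeral_2_eq_2])
  show Vx: "bipoly_deriv N a 1 0 x y = bipoly_deriv N a 1 0 0 y + \<alpha> * x" for x y
    by (rule affine_if_const_derivative[OF Vx_x])
  have "((\<lambda>y. bipoly_deriv N a 1 0 x y) has_real_derivative bipoly_deriv N a 1 1 0 y) (at y)"
    unfolding Vx[of x]
    by (rule DERIV_cong[OF DERIV_add[OF has_real_derivative_bipoly_deriv_snd DERIV_const]]) simp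
  then show "bipoly_deriv N a 1 1 x y = bipoly_deriv N a 1 1 0 y"
    using has_real_derivative_bipoly_deriv_snd[of N a 1 0 x y] by (metis DERIV_unique One_nat_def)
  have second_difference_V: "second_difference (\<lambda>x. bipoly_deriv N a 0 0 x y) = \<alpha>" for y
    by (rule second_difference_eq_if_const_second_derivative[OF _ Vx_x])
      (use has_real_derivative_bipoly_deriv_fst[of N a 0] in simp)
  then show "second_difference (\<lambda>x. bipoly_deriv N a 0 0 x y) = \<alpha>" .
  have second_difference_deriv:
    "((\<lambda>y. second_difference (\<lambda>x. bipoly_deriv N a 0 l x y)) has_real_derivative
        second_difference (\<lambda>x. bipoly_deriv N a 0 (Suc l) x y)) (at y)" for l y
    by (intro has_real_derivative_second_difference has_real_derivative_bipoly_deriv_snd)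
  have "((\<lambda>y. second_difference (\<lambda>x. bipoly_deriv N a 0 0 x y)) has_real_derivative 0) (at y)" for y
    unfolding second_difference_V by simp
  then have Vm: "second_difference (\<lambda>x. bipoly_deriv N a 0 1 x y) = 0" for y
    using DERIV_unique[OF second_difference_deriv[of 0 y]] by simp
  have "((\<lambda>y. second_difference (\<lambda>x. bipoly_deriv N a 0 1 x y)) has_real_derivative 0) (at y)" for y
    unfolding Vm by simp
  then show "second_difference (\<lambda>x. bipoly_deriv N a 0 2 x y) = 0"
    using DERIV_unique[OF second_difference_deriv[of 1 y]] by (simp add: numeral_2_eq_2)
qed

lemma hjb_bipoly_second_deriv_eq_0:
  fixes c Ct CP :: "nat \<Rightarrow> nat \<Rightarrow> real \<Rightarrow> real \<Rightarrow> real" and a :: "real \<Rightarrow> real \<Rightarrow> real"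
  assumes Ct: "\<And>t P i j. 0 < t \<Longrightarrow> t < T \<Longrightarrow> 0 < P \<Longrightarrow>
      ((\<lambda>s. c i j s P) has_real_derivative Ct i j t P) (at t)"
    and CP: "\<And>t P i j. 0 < t \<Longrightarrow> t < T \<Longrightarrow> 0 < P \<Longrightarrow>
      ((\<lambda>q. c i j t q) has_real_derivative CP i j t P) (at P)"
    and Vxx: "\<And>t P x m. 0 < t \<Longrightarrow> t < T \<Longrightarrow> 0 < P \<Longrightarrow>
      bipoly_deriv N (\<lambda>i j. c i j t P) 2 0 x m = a t P"
    and hjb: "\<And>t P x m. 0 < t \<Longrightarrow> t < T \<Longrightarrow> 0 < P \<Longrightarrow>
      hjb_residual \<tau> K N (\<lambda>i j. c i j t P) (\<lambda>i j. Ct i j t P) (\<lambda>i j. CP i j t P) P x m = 0"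
    and dom: "0 < t" "t < T" "0 < P"
  shows "a t P = 0"
proof -
  have second_difference_V: "second_difference (\<lambda>x. bipoly_deriv N (\<lambda>i j. c i j s q) 0 0 x m) = a s q"
    if "0 < s" "s < T" "0 < q" for s q m
    using bipoly_deriv_quadratic_fst(3)[OF Vxx[OF that]] .
  note quadratic = bipoly_deriv_quadratic_fst[OF Vxx[OF dom]]
  define Vt where "Vt m = second_difference (\<lambda>x. bipoly_deriv N (\<lambda>i j. Ct i j t P) 0 0 x m)" for m
  define VP where "VP m = second_difference (\<lambda>x. bipoly_deriv N (\<lambda>i j. CP i j t P) 0 0 x m)" for m
  \<comment> \<open>Vt m is the t-derivative of the second difference of V, which equals a t P for every m.\<close>
  have Vt: "Vt m = Vt 0" for m
  proof -
    have "((\<lambda>s. second_difference (\<lambda>x. bipoly_deriv N (\<lambda>i j. c i j s P) 0 0 x k))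
            has_real_derivative Vt k) (at t)" for k
      unfolding Vt_def
      by (intro has_real_derivative_second_difference has_real_derivative_bipoly_deriv_coeffs Ct dom)
    from has_real_derivative_unique_on_open[OF this[of m] this[of 0], of "{0<..<T}"]
    show ?thesis
      using dom by (simp add: second_difference_V)
  qed
  have VP: "VP m = VP 0" for m
  proof -
    have "((\<lambda>q. second_difference (\<lambda>x. bipoly_deriv N (\<lambda>i j. c i j t q) 0 0 x k))
            has_real_derivative VP k) (at P)" for k
      unfolding VP_def
      by (intro has_real_derivative_second_difference has_real_derivative_bipoly_deriv_coeffs CP dom)
    from has_real_derivative_unique_on_open[OF this[of m] this[of 0], of "{0<..}"]
    show ?thesis
      using dom by (simp add: second_difference_V)
  qed
  have "Vt m - P\<^sup>2 * VP m = m\<^sup>2 * a t P" for m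
  proof -
    let ?V = "\<lambda>k l x. bipoly_deriv N (\<lambda>i j. c i j t P) k l x m"
    have square: "second_difference (\<lambda>x. (m * ?V 1 0 x + P * ?V 1 1 x)\<^sup>2 / (2 * a t P)) = m\<^sup>2 * a t P"
      by (rule second_difference_square_affine[OF quadratic(1)]) (metis quadratic(2))
    have "(\<lambda>x. 0) = (\<lambda>x. bipoly_deriv N (\<lambda>i j. Ct i j t P) 0 0 x m + P\<^sup>2 / 2 * ?V 0 2 x
        - P\<^sup>2 * bipoly_deriv N (\<lambda>i j. CP i j t P) 0 0 x m
        - (m * ?V 1 0 x + P * ?V 1 1 x)\<^sup>2 / (2 * a t P) - \<tau> / 2 * ln (K / a t P))"
      using hjb[OF dom] by (auto simp only: hjb_residual_def Vxx[OF dom])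
    from arg_cong[where f = second_difference, OF this]
    have "0 = Vt m + P\<^sup>2 / 2 * 0 - P\<^sup>2 * VP m - m\<^sup>2 * a t P - 0"
      unfolding Vt_def VP_def
      by (simp only: second_difference_add second_difference_diff second_difference_cmult
          second_difference_const square quadratic(4))
    then show ?thesis by simp
  qed
  from this[of 0] this[of 1] show ?thesis
    using Vt[of 1] VP[of 1] by simp
qed

lemma smooth2_on_has_partial_derivatives:
  assumes "\<And>i. smooth2_on S (f i)"
  obtains g h where "\<And>i x y. (x, y) \<in> S \<Longrightarrow> ((\<lambda>s. f i (s, y)) has_real_derivative g i x y) (at x)"
    and "\<And>i x y. (x, y) \<in> S \<Longrightarrow> ((\<lambda>s. f i (x, s)) has_real_derivative h i x y) (at y)"
proof -
  have "\<exists>g h. \<forall>p\<in>S. (f i has_derivative (\<lambda>(u, v). g p * u + h p * v)) (at p)" for i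
    using assms[of i] by (cases rule: smooth2_on.cases) blast
  then obtain g h
    where f': "\<And>i p. p \<in> S \<Longrightarrow> (f i has_derivative (\<lambda>(u, v). g i p * u + h i p * v)) (at p)"
    by metis
  show thesis
  proof (rule that[of "\<lambda>i x y. g i (x, y)" "\<lambda>i x y. h i (x, y)"])
    fix i x y assume "(x, y) \<in> S"
    have "((\<lambda>s. (s, y)) has_derivative (\<lambda>u. (u, 0))) (at x)"
      by (auto intro!: derivative_eq_intros)
    from diff_chain_at[OF this f'[OF \<open>(x, y) \<in> S\<close>]]
    show "((\<lambda>s. f i (s, y)) has_real_derivative g i (x, y)) (at x)"
      by (simp add: o_def has_field_derivative_def mult_commute_abs)
    have "((\<lambda>s. (x, s)) has_derivative (\<lambda>v. (0, v))) (at y)"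
      by (auto intro!: derivative_eq_intros)
    from diff_chain_at[OF this f'[OF \<open>(x, y) \<in> S\<close>]]
    show "((\<lambda>s. f i (x, s)) has_real_derivative h i (x, y)) (at y)"
      by (simp add: o_def has_field_derivative_def mult_commute_abs)
  qed
qed

lemma deriv_eq_if_eq_on_open:
  assumes "(g has_real_derivative D) (at x)" and "open S" "x \<in> S" "\<And>y. y \<in> S \<Longrightarrow> f y = g y"
  shows "deriv f x = D"
  using assms by (metis DERIV_imp_deriv has_field_derivative_transform_within_open)

lemma hjb_bipoly_second_deriv_const:
  fixes C Ct CP :: "nat \<Rightarrow> nat \<Rightarrow> real" and P \<tau> K :: real
  assumes "\<tau> > 0" "K > 0"
    and hjb: "\<And>x m. 0 < bipoly_deriv N C 2 0 x m \<and> hjb_residual \<tau> K N C Ct CP P x m = 0"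
  shows "bipoly_deriv N C 2 0 x m = bipoly_deriv N C 2 0 0 0"
proof -
  let ?R = "\<lambda>x m. bipoly_deriv N Ct 0 0 x m + P\<^sup>2 / 2 * bipoly_deriv N C 0 2 x m
    - P\<^sup>2 * bipoly_deriv N CP 0 0 x m"
  let ?B = "\<lambda>x m. m * bipoly_deriv N C 1 0 x m + P * bipoly_deriv N C 1 1 x m"
  note polynomial = real_polynomial_function_diff real_polynomial_function.intros(2,4)
    real_polynomial_function.intros(1)[OF bounded_linear_ident]
  have "bipoly_deriv N C 2 0 x m = bipoly_deriv N C 2 0 0 m"
    by (rule real_polynomial_function_const_if_log_balance
        [of "\<lambda>x. bipoly_deriv N C 2 0 x m" "\<lambda>x. ?R x m" "\<lambda>x. ?B x m" \<tau> K])
      (use assms in \<open>auto simp: hjb_residual_def intro!: real_polynomial_function_bipoly_deriv_fst polynomial\<close>)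
  also have "\<dots> = bipoly_deriv N C 2 0 0 0"
    by (rule real_polynomial_function_const_if_log_balance
        [of "\<lambda>m. bipoly_deriv N C 2 0 0 m" "?R 0" "?B 0" \<tau> K])
      (use assms in \<open>auto simp: hjb_residual_def intro!: real_polynomial_function_bipoly_deriv_snd polynomial\<close>)
  finally show ?thesis .
qed

lemma no_bipoly_hjb_solution:
  fixes c Ct CP :: "nat \<Rightarrow> nat \<Rightarrow> real \<Rightarrow> real \<Rightarrow> real" and \<tau> K T :: real
  assumes "\<tau> > 0" "K > 0" "T > 0"
    and Ct: "\<And>t P i j. 0 < t \<Longrightarrow> t < T \<Longrightarrow> 0 < P \<Longrightarrow>
      ((\<lambda>s. c i j s P) has_real_derivative Ct i j t P) (at t)"
    and CP: "\<And>t P i j. 0 < t \<Longrightarrow> t < T \<Longrightarrow> 0 < P \<Longrightarrow>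
      ((\<lambda>q. c i j t q) has_real_derivative CP i j t P) (at P)"
    and hjb: "\<And>t P x m. 0 < t \<Longrightarrow> t < T \<Longrightarrow> 0 < P \<Longrightarrow>
      0 < bipoly_deriv N (\<lambda>i j. c i j t P) 2 0 x m \<and>
      hjb_residual \<tau> K N (\<lambda>i j. c i j t P) (\<lambda>i j. Ct i j t P) (\<lambda>i j. CP i j t P) P x m = 0"
  shows False
proof -
  define a where "a t P = bipoly_deriv N (\<lambda>i j. c i j t P) 2 0 0 0" for t P
  have Vxx: "bipoly_deriv N (\<lambda>i j. c i j t P) 2 0 x m = a t P" if "0 < t" "t < T" "0 < P" for t P x m
    unfolding a_def by (rule hjb_bipoly_second_deriv_const[OF assms(1,2) hjb[OF that]])
  have residual: "hjb_residual \<tau> K N (\<lambda>i j. c i j t P) (\<lambda>i j. Ct i j t P) (\<lambda>i j. CP i j t P) P x m = 0"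
    if "0 < t" "t < T" "0 < P" for t P x m
    using hjb[OF that] by simp
  have "a (T / 2) 1 = 0"
    by (rule hjb_bipoly_second_deriv_eq_0[OF Ct CP Vxx residual]) (use \<open>T > 0\<close> in auto)
  moreover have "a (T / 2) 1 > 0"
    using hjb[of "T / 2" 1 0 0] \<open>T > 0\<close> by (simp add: a_def)
  ultimately show False by simp
qed

lemma hjb_polynomial_solution_coefficient_form:
  fixes \<sigma> \<tau> T :: real and V :: "real \<Rightarrow> real \<Rightarrow> real \<Rightarrow> real \<Rightarrow> real"
  assumes "(\<exists>(N::nat) (c :: nat \<Rightarrow> nat \<Rightarrow> real \<Rightarrow> real \<Rightarrow> real).
        (\<forall>i j. smooth2_on ({0<..<T} \<times> {0<..}) (\<lambda>(t, P). c i j t P)) \<and>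
        (\<forall>t x m P. 0 < t \<and> t < T \<and> 0 < P \<longrightarrow>
            V t x m P = (\<Sum>i\<le>N. \<Sum>j\<le>N. c i j t P * x ^ i * m ^ j))) \<and>
     (\<forall>t x m P. 0 < t \<and> t < T \<and> 0 < P \<longrightarrow>
        (let Vxx = deriv (\<lambda>y. deriv (\<lambda>z. V t z m P) y) x in
         Vxx > 0 \<and>
         0 = deriv (\<lambda>s. V s x m P) t
             + P\<^sup>2 / 2 * deriv (\<lambda>n. deriv (\<lambda>k. V t x k P) n) m
             - P\<^sup>2 * deriv (\<lambda>q. V t x m q) P
             - (m * deriv (\<lambda>z. V t z m P) x
                + P * deriv (\<lambda>k. deriv (\<lambda>z. V t z k P) x) m)\<^sup>2 / (2 * Vxx)
             - \<tau> / 2 * ln (2 * pi * \<tau> / (\<sigma>\<^sup>2 * Vxx))))"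
  obtains N c Ct CP where
    "\<And>t P i j. 0 < t \<Longrightarrow> t < T \<Longrightarrow> 0 < P \<Longrightarrow>
      ((\<lambda>s. c i j s P) has_real_derivative Ct i j t P) (at t)"
    "\<And>t P i j. 0 < t \<Longrightarrow> t < T \<Longrightarrow> 0 < P \<Longrightarrow>
      ((\<lambda>q. c i j t q) has_real_derivative CP i j t P) (at P)"
    "\<And>t P x m. 0 < t \<Longrightarrow> t < T \<Longrightarrow> 0 < P \<Longrightarrow>
      0 < bipoly_deriv N (\<lambda>i j. c i j t P) 2 0 x m \<and>
      hjb_residual \<tau> (2 * pi * \<tau> / \<sigma>\<^sup>2) N (\<lambda>i j. c i j t P) (\<lambda>i j. Ct i j t P) (\<lambda>i j. CP i j t P) P x m
        = 0"
proof -
  from assms obtain N c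
    where smooth: "\<forall>i j. smooth2_on ({0<..<T} \<times> {0<..}) (\<lambda>(t, P). c i j t P)"
      and rep: "\<forall>t x m P. 0 < t \<and> t < T \<and> 0 < P \<longrightarrow>
        V t x m P = (\<Sum>i\<le>N. \<Sum>j\<le>N. c i j t P * x ^ i * m ^ j)"
    by blast
  obtain Ct CP where
    Ct: "\<And>t P i j. 0 < t \<Longrightarrow> t < T \<Longrightarrow> 0 < P \<Longrightarrow>
      ((\<lambda>s. c i j s P) has_real_derivative Ct i j t P) (at t)" and
    CP: "\<And>t P i j. 0 < t \<Longrightarrow> t < T \<Longrightarrow> 0 < P \<Longrightarrow>
      ((\<lambda>q. c i j t q) has_real_derivative CP i j t P) (at P)"
  proof -
    have "smooth2_on ({0<..<T} \<times> {0<..}) ((\<lambda>(i, j) (t, P). c i j t P) ij)" for ij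
      using smooth by (cases ij) simp
    then obtain g h where
      g: "\<And>ij t P. (t, P) \<in> {0<..<T} \<times> {0<..} \<Longrightarrow>
        ((\<lambda>s. (\<lambda>(i, j) (t, P). c i j t P) ij (s, P)) has_real_derivative g ij t P) (at t)" and
      h: "\<And>ij t P. (t, P) \<in> {0<..<T} \<times> {0<..} \<Longrightarrow>
        ((\<lambda>q. (\<lambda>(i, j) (t, P). c i j t P) ij (t, q)) has_real_derivative h ij t P) (at P)"
      using smooth2_on_has_partial_derivatives[of _ "\<lambda>(i, j) (t, P). c i j t P"] by blast
    show thesis
      by (rule that[of "\<lambda>i j. g (i, j)" "\<lambda>i j. h (i, j)"])
        (use g h in auto)
  qed
  have V: "V t x m P = bipoly_deriv N (\<lambda>i j. c i j t P) 0 0 x m" if "0 < t" "t < T" "0 < P" for t x m P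
    using rep that by (simp add: bipoly_deriv_0_0)
  have V_t: "deriv (\<lambda>s. V s x m P) t = bipoly_deriv N (\<lambda>i j. Ct i j t P) 0 0 x m"
    if "0 < t" "t < T" "0 < P" for t x m P
    by (rule deriv_eq_if_eq_on_open[OF has_real_derivative_bipoly_deriv_coeffs[OF Ct[OF that]],
        of "{0<..<T}"]) (use that in \<open>auto simp: V\<close>)
  have V_P: "deriv (\<lambda>q. V t x m q) P = bipoly_deriv N (\<lambda>i j. CP i j t P) 0 0 x m"
    if "0 < t" "t < T" "0 < P" for t x m P
    by (rule deriv_eq_if_eq_on_open[OF has_real_derivative_bipoly_deriv_coeffs[OF CP[OF that]],
        of "{0<..}"]) (use that in \<open>auto simp: V\<close>)
  show thesis
  proof (rule that[OF Ct CP])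
    fix t P x m :: real assume dom: "0 < t" "t < T" "0 < P"
    from assms[THEN conjunct2, rule_format, of t P m x] dom
    show "0 < bipoly_deriv N (\<lambda>i j. c i j t P) 2 0 x m \<and>
      hjb_residual \<tau> (2 * pi * \<tau> / \<sigma>\<^sup>2) N (\<lambda>i j. c i j t P) (\<lambda>i j. Ct i j t P) (\<lambda>i j. CP i j t P) P x m
        = 0"
      by (simp add: hjb_residual_def Let_def V V_t V_P numeral_2_eq_2)
  qed
qed

theorem proposition4p1:
  fixes \<sigma> \<tau> T :: real
  assumes "\<sigma> > 0" and "\<tau> > 0" and "T > 0"
  shows "\<not> (\<exists>V :: real \<Rightarrow> real \<Rightarrow> real \<Rightarrow> real \<Rightarrow> real.
     (\<exists>(N::nat) (c :: nat \<Rightarrow> nat \<Rightarrow> real \<Rightarrow> real \<Rightarrow> real).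
        (\<forall>i j. smooth2_on ({0<..<T} \<times> {0<..}) (\<lambda>(t, P). c i j t P)) \<and>
        (\<forall>t x m P. 0 < t \<and> t < T \<and> 0 < P \<longrightarrow>
            V t x m P = (\<Sum>i\<le>N. \<Sum>j\<le>N. c i j t P * x ^ i * m ^ j))) \<and>
     (\<forall>t x m P. 0 < t \<and> t < T \<and> 0 < P \<longrightarrow>
        (let Vxx = deriv (\<lambda>y. deriv (\<lambda>z. V t z m P) y) x in
         Vxx > 0 \<and>
         0 = deriv (\<lambda>s. V s x m P) t
             + P\<^sup>2 / 2 * deriv (\<lambda>n. deriv (\<lambda>k. V t x k P) n) m
             - P\<^sup>2 * deriv (\<lambda>q. V t x m q) P
             - (m * deriv (\<lambda>z. V t z m P) x
                + P * deriv (\<lambda>k. deriv (\<lambda>z. V t z k P) x) m)\<^sup>2 / (2 * Vxx)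
             - \<tau> / 2 * ln (2 * pi * \<tau> / (\<sigma>\<^sup>2 * Vxx)))))"
  by (intro notI, elim exE hjb_polynomial_solution_coefficient_form,
      rule no_bipoly_hjb_solution[where K = "2 * pi * \<tau> / \<sigma>\<^sup>2", OF \<open>\<tau> > 0\<close> _ \<open>T > 0\<close>])
    (use \<open>\<sigma> > 0\<close> \<open>\<tau> > 0\<close> in simp)

end
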